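(* Let $X$ be a Borel space, $\mu$ a Borel probability measure on $X$, $L_\iota\ge0$, and $\iota:X\times\mathbb{R}^l\to\mathbb{R}$ an $L_\iota$-LG integrand, with induced integral functional $I_\iota:L^2(\mu,\mathbb{R}^l)\to\mathbb{R}$. Then for all $f\in L^2(\mu,\mathbb{R}^l)$, $\nabla I_\iota(f)(x)=\nabla_z\iota(x,f(x))$ for $\mu$-a.e. $x$, and $I_\iota$ is $L_\iota$-LG (on $L^2(\mu,\mathbb{R}^l)$). If moreover $\iota$ is also a $\lambda_\iota$-PL integrand for some $\lambda_\iota>0$, then $I_\iota$ is $\lambda_\iota$-PL (on $L^2(\mu,\mathbb{R}^l)$).
   Context: $L^2(\mu,\mathbb{R}^l)$ is the Hilbert space of $\mu$-equivalence classes of square-integrable $\mathbb{R}^l$-valued functions. An integrand is a function $\iota:X\times\mathbb{R}^l\to\mathbb{R}$ that is finite, measurable in $x$ and differentiable in $z$; its integral functional is $I_\iota(f)=\int\iota(x,f(x))\,d\mu(x)$, assumed to be a well-defined real number for every $f\in L^2(\mu,\mathbb{R}^l)$. A function $g$ on a Hilbert space $H$ is $L$-LG on a set $E$ if it is Fréchet differentiable there and $\|\nabla g(u)-\nabla g(v)\|\le L\|u-v\|$ for $u,v\in E$; if $g$ is bounded below with $g_*=\inf_Hg\in\mathbb{R}$, it is $\lambda$-PL on $E$ ($\lambda>0$) if $\tfrac12\|\nabla g(u)\|^2\ge\lambda(g(u)-g_* )$ for $u\in E$. $\iota$ is an $L$-LG integrand if $\iota(x,\cdot)$ is $L$-LG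 on $\mathbb{R}^l$ for $\mu$-a.e. $x$, and a $\lambda$-PL integrand if $\iota(x,\cdot)$ is $\lambda$-PL on $\mathbb{R}^l$ for $\mu$-a.e. $x$. *)

theory Defs
  imports "HOL-Analysis.Analysis" "HOL-Probability.Probability"
begin

definition grad :: "('v::real_inner \<Rightarrow> real) \<Rightarrow> 'v \<Rightarrow> 'v" where
  "grad g u = (SOME D. GDERIV g u :> D)"

definition LG_on :: "'v::real_inner set \<Rightarrow> real \<Rightarrow> ('v \<Rightarrow> real) \<Rightarrow> bool" where
  "LG_on E L g \<longleftrightarrow> (\<forall>u\<in>E. \<exists>D. GDERIV g u :> D) \<and>
     (\<forall>u\<in>E. \<forall>v\<in>E. norm (grad g u - grad g v) \<le> L * norm (u - v))"

definition PL_on :: "'v::real_inner set \<Rightarrow> real \<Rightarrow> ('v \<Rightarrow> real) \<Rightarrow> bool" where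
  "PL_on E lam g \<longleftrightarrow> lam > 0 \<and> bdd_below (range g) \<and>
     (\<forall>u\<in>E. (1/2) * (norm (grad g u))\<^sup>2 \<ge> lam * (g u - (INF w. g w)))"

(* L^2(mu, R^l), via representatives: Borel measurable square-integrable functions *)
definition L2 :: "'a measure \<Rightarrow> ('a \<Rightarrow> real^'l) set" where
  "L2 M = {f. f \<in> borel_measurable M \<and> integrable M (\<lambda>x. (norm (f x))\<^sup>2)}"

definition L2_inner :: "'a measure \<Rightarrow> ('a \<Rightarrow> real^'l) \<Rightarrow> ('a \<Rightarrow> real^'l) \<Rightarrow> real" where
  "L2_inner M f g = (\<integral>x. inner (f x) (g x) \<partial>M)"

definition L2_norm :: "'a measure \<Rightarrow> ('a \<Rightarrow> real^'l) \<Rightarrow> real" where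
  "L2_norm M f = sqrt (\<integral>x. (norm (f x))\<^sup>2 \<partial>M)"

definition int_functional :: "'a measure \<Rightarrow> ('a \<Rightarrow> real^'l \<Rightarrow> real) \<Rightarrow> ('a \<Rightarrow> real^'l) \<Rightarrow> real" where
  "int_functional M \<iota> f = (\<integral>x. \<iota> x (f x) \<partial>M)"

definition has_L2_gradient ::
  "'a measure \<Rightarrow> (('a \<Rightarrow> real^'l) \<Rightarrow> real) \<Rightarrow> ('a \<Rightarrow> real^'l) \<Rightarrow> ('a \<Rightarrow> real^'l) \<Rightarrow> bool" where
  "has_L2_gradient M F f G \<longleftrightarrow> G \<in> L2 M \<and>
     (\<forall>e>0. \<exists>d>0. \<forall>h\<in>L2 M. L2_norm M h < d \<longrightarrow>
        \<bar>F (\<lambda>x. f x + h x) - F f - L2_inner M G h\<bar> \<le> e * L2_norm M h)"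

definition L2_LG :: "'a measure \<Rightarrow> real \<Rightarrow> (('a \<Rightarrow> real^'l) \<Rightarrow> real) \<Rightarrow> bool" where
  "L2_LG M L F \<longleftrightarrow> (\<forall>f\<in>L2 M. \<exists>G. has_L2_gradient M F f G) \<and>
     (\<forall>f\<in>L2 M. \<forall>g\<in>L2 M. \<forall>Gf Gg. has_L2_gradient M F f Gf \<longrightarrow> has_L2_gradient M F g Gg \<longrightarrow>
        L2_norm M (\<lambda>x. Gf x - Gg x) \<le> L * L2_norm M (\<lambda>x. f x - g x))"

definition L2_PL :: "'a measure \<Rightarrow> real \<Rightarrow> (('a \<Rightarrow> real^'l) \<Rightarrow> real) \<Rightarrow> bool" where
  "L2_PL M lam F \<longleftrightarrow> lam > 0 \<and> bdd_below (F ` L2 M) \<and>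
     (\<forall>f\<in>L2 M. \<forall>G. has_L2_gradient M F f G \<longrightarrow>
        (1/2) * (L2_norm M G)\<^sup>2 \<ge> lam * (F f - (INF g\<in>L2 M. F g)))"

end

theory Submission
  imports Defs
begin

(*
  Integrating the pointwise Taylor bound |iota(x, z + h) - iota(x, z) - <grad iota(x, z), h>| <= L |h|^2
  of an L-LG function shows that x |-> grad iota(x, f x) is the L^2 gradient of I_iota at f, provided
  it lies in L^2 at all. That it does is where finiteness of I_iota on all of L^2 enters: subtracting
  the Taylor remainder, <grad iota(x, f x), h x> is integrable for every h in L^2, and a function
  pairing integrably with all of L^2 lies in L^2 (Koethe duality, proved via the Abel-Dini theorem
  on the level bands of |grad|^2). Since L^2 gradients are unique a.e., the Lipschitz and PL
  inequalities for I_iota follow by integrating their pointwise versions.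
*)

section \<open>Weighted series and level bands\<close>

text \<open>Leading zero partial sums are harmless: division by zero yields zero terms.\<close>

lemma summable_divide_square_partial_sums:
  fixes s :: "nat \<Rightarrow> real"
  assumes nonneg: "\<And>k. s k \<ge> 0"
  shows "summable (\<lambda>k. s k / (\<Sum>i\<le>k. s i)\<^sup>2)"
proof (cases "\<exists>k0. (\<Sum>i\<le>k0. s i) > 0")
  case False
  then have "(\<Sum>i\<le>k. s i) = 0" for k
    using nonneg by (meson linorder_neqE_linordered_idom not_less sum_nonneg)
  then show ?thesis by simp
next
  case True
  define S where "S k = (\<Sum>i\<le>k. s i)" for k
  obtain k0 where k0: "S k0 > 0" using True unfolding S_def by blast
  have S_Suc: "S (Suc n) = S n + s (Suc n)" for n unfolding S_def by simp
  have S_pos: "S n > 0" if "k0 \<le> n" for n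
    using k0 sum_mono2[of "{..n}" "{..k0}" s] that nonneg unfolding S_def by fastforce
  define A where "A = (\<Sum>k\<le>k0. s k / (S k)\<^sup>2)"
  have telescope: "(\<Sum>k\<le>n. s k / (S k)\<^sup>2) \<le> A + 1 / S k0 - 1 / S n" if "k0 \<le> n" for n
    using that
  proof (induction n rule: dec_induct)
    case base
    show ?case unfolding A_def by simp
  next
    case (step n)
    have "s (Suc n) / (S (Suc n))\<^sup>2 \<le> s (Suc n) / (S n * S (Suc n))"
      using S_pos[OF step.hyps(1)] nonneg[of "Suc n"] unfolding S_Suc power2_eq_square
      by (intro divide_left_mono mult_right_mono mult_pos_pos) auto
    also have "\<dots> = 1 / S n - 1 / S (Suc n)"
      using S_pos[OF step.hyps(1)] S_pos[of "Suc n"] step.hyps(1)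
      by (simp add: S_Suc field_simps)
    finally show ?case using step.IH by simp
  qed
  show ?thesis
  proof (rule summableI_nonneg_bounded)
    show "0 \<le> s k / (\<Sum>i\<le>k. s i)\<^sup>2" for k using nonneg by simp
    show "(\<Sum>k<n. s k / (\<Sum>i\<le>k. s i)\<^sup>2) \<le> A + 1 / S k0" for n
    proof -
      have "(\<Sum>k<n. s k / (S k)\<^sup>2) \<le> (\<Sum>k\<le>n + k0. s k / (S k)\<^sup>2)"
        using nonneg by (intro sum_mono2) auto
      also have "\<dots> \<le> A + 1 / S k0" using telescope[of "n + k0"] S_pos[of "n + k0"]
        by (smt (verit) le_add2 divide_pos_pos)
      finally show ?thesis unfolding S_def .
    qed
  qed
qed

lemma not_summable_divide_partial_sums:
  fixes s :: "nat \<Rightarrow> real"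
  assumes nonneg: "\<And>k. s k \<ge> 0" and diverges: "\<not> summable s"
  shows "\<not> summable (\<lambda>k. s k / (\<Sum>i\<le>k. s i))"
proof
  define S where "S k = (\<Sum>i\<le>k. s i)" for k
  assume "summable (\<lambda>k. s k / (\<Sum>i\<le>k. s i))"
  from summable_partial_sum_bound[OF this, of "1/2"]
  obtain N where N: "\<And>m n. m \<ge> N \<Longrightarrow> norm (\<Sum>k=m..n. s k / S k) < 1/2"
    unfolding S_def by auto
  have S_mono: "S m \<le> S n" if "m \<le> n" for m n
    unfolding S_def using that nonneg by (intro sum_mono2) auto
  have unbounded: "\<exists>n. c < S n" for c
  proof (rule ccontr)
    assume "\<not> ?thesis"
    moreover have "(\<Sum>i<n. s i) \<le> S n" for n
      unfolding S_def using nonneg by (intro sum_mono2) auto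
    ultimately have "(\<Sum>i<n. s i) \<le> c" for n
      by (meson not_le order_trans)
    then show False using diverges nonneg summableI_nonneg_bounded by blast
  qed
  obtain m0 where "S m0 > 0" using unbounded by blast
  define m where "m = max N m0"
  have S_m: "S m > 0" using S_mono[of m0 m] \<open>S m0 > 0\<close> unfolding m_def by simp
  obtain n where S_n: "S n > 2 * S m" using unbounded by blast
  have "m < n" using S_mono[of n m] S_n S_m by linarith
  have split: "S n = S m + (\<Sum>k=Suc m..n. s k)"
  proof -
    have "{..n} = {..m} \<union> {Suc m..n}" using \<open>m < n\<close> by auto
    then show ?thesis unfolding S_def by (simp add: sum.union_disjoint)
  qed
  have "(1/2::real) < (S n - S m) / S n" using S_n S_m by (simp add: field_simps)
  also have "\<dots> = (\<Sum>k=Suc m..n. s k / S n)" by (simp add: split sum_divide_distrib)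
  also have "\<dots> \<le> (\<Sum>k=Suc m..n. s k / S k)"
  proof (intro sum_mono divide_left_mono)
    fix k assume "k \<in> {Suc m..n}"
    then have "S m \<le> S k" "S k \<le> S n" using S_mono by auto
    then show "S k \<le> S n" "0 < S n * S k" using S_m by auto
  qed (use nonneg in auto)
  also have "\<dots> < 1/2" using N[of "Suc m" n] unfolding m_def by (simp add: abs_less_iff le_SucI)
  finally show False .
qed

lemma not_summable_obtain_weight:
  fixes s :: "nat \<Rightarrow> real"
  assumes "\<And>k. s k \<ge> 0" and "\<not> summable s"
  obtains t where "\<And>k. t k \<ge> 0" "summable (\<lambda>k. (t k)\<^sup>2 * s k)" "\<not> summable (\<lambda>k. t k * s k)"
proof
  let ?t = "\<lambda>k. inverse (\<Sum>i\<le>k. s i)"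
  show "?t k \<ge> 0" for k using assms(1) by (simp add: sum_nonneg)
  show "summable (\<lambda>k. (?t k)\<^sup>2 * s k)"
    using summable_divide_square_partial_sums[OF assms(1)] by (simp add: field_simps power_inverse)
  show "\<not> summable (\<lambda>k. ?t k * s k)"
    using not_summable_divide_partial_sums[OF assms] by (simp add: field_simps)
qed

definition band_integral :: "'a measure \<Rightarrow> ('a \<Rightarrow> real) \<Rightarrow> nat \<Rightarrow> real" where
  "band_integral M \<phi> k = enn2real (\<integral>\<^sup>+ x. ennreal (if nat \<lfloor>\<phi> x\<rfloor> = k then \<phi> x else 0) \<partial>M)"

lemma band_integral_nonneg: "band_integral M \<phi> k \<ge> 0"
  unfolding band_integral_def by simp

lemma nn_integral_band:
  fixes \<phi> :: "'a \<Rightarrow> real"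
  assumes "finite_measure M"
  shows "(\<integral>\<^sup>+ x. ennreal (if nat \<lfloor>\<phi> x\<rfloor> = k then \<phi> x else 0) \<partial>M) = ennreal (band_integral M \<phi> k)"
proof -
  have "(if nat \<lfloor>\<phi> x\<rfloor> = k then \<phi> x else 0) \<le> real (Suc k)" for x
    by (cases "nat \<lfloor>\<phi> x\<rfloor> = k") (simp_all, linarith)
  then have "(\<integral>\<^sup>+ x. ennreal (if nat \<lfloor>\<phi> x\<rfloor> = k then \<phi> x else 0) \<partial>M) \<le> (\<integral>\<^sup>+ x. ennreal (Suc k) \<partial>M)"
    by (intro nn_integral_mono ennreal_leI)
  also have "\<dots> < \<infinity>"
    using finite_measure.emeasure_finite[OF assms, of "space M"]
    by (simp add: ennreal_mult_less_top less_top)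
  finally show ?thesis unfolding band_integral_def by (simp add: less_top)
qed

lemma integrable_band_weighted_iff_summable:
  fixes \<phi> :: "'a \<Rightarrow> real" and c :: "nat \<Rightarrow> real"
  assumes fin: "finite_measure M" and [measurable]: "\<phi> \<in> borel_measurable M"
    and \<phi>_nonneg: "\<And>x. \<phi> x \<ge> 0" and c_nonneg: "\<And>k. c k \<ge> 0"
  shows "integrable M (\<lambda>x. c (nat \<lfloor>\<phi> x\<rfloor>) * \<phi> x) \<longleftrightarrow> summable (\<lambda>k. c k * band_integral M \<phi> k)"
proof -
  have pointwise: "ennreal (c (nat \<lfloor>\<phi> x\<rfloor>) * \<phi> x) =
      (\<Sum>k. ennreal (c k) * ennreal (if nat \<lfloor>\<phi> x\<rfloor> = k then \<phi> x else 0))" for x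
  proof -
    have "(\<Sum>k. ennreal (c k) * ennreal (if nat \<lfloor>\<phi> x\<rfloor> = k then \<phi> x else 0)) =
        ennreal (c (nat \<lfloor>\<phi> x\<rfloor>)) * ennreal (\<phi> x)"
      by (subst suminf_finite[of "{nat \<lfloor>\<phi> x\<rfloor>}"]) auto
    then show ?thesis by (simp add: ennreal_mult c_nonneg \<phi>_nonneg)
  qed
  have band_measurable: "(\<lambda>x. ennreal (if nat \<lfloor>\<phi> x\<rfloor> = k then \<phi> x else 0)) \<in> borel_measurable M" for k
    by measurable
  have "(\<integral>\<^sup>+ x. ennreal (c (nat \<lfloor>\<phi> x\<rfloor>) * \<phi> x) \<partial>M) =
      (\<Sum>k. \<integral>\<^sup>+ x. ennreal (c k) * ennreal (if nat \<lfloor>\<phi> x\<rfloor> = k then \<phi> x else 0) \<partial>M)"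
    unfolding pointwise by (rule nn_integral_suminf) (use band_measurable in measurable)
  also have "\<dots> = (\<Sum>k. ennreal (c k * band_integral M \<phi> k))"
    by (intro suminf_cong) (simp add: nn_integral_cmult[OF band_measurable] nn_integral_band[OF fin]
        ennreal_mult c_nonneg band_integral_nonneg)
  finally have "(\<integral>\<^sup>+ x. ennreal (c (nat \<lfloor>\<phi> x\<rfloor>) * \<phi> x) \<partial>M) = (\<Sum>k. ennreal (c k * band_integral M \<phi> k))" .
  moreover have "(\<Sum>k. ennreal (c k * band_integral M \<phi> k)) < \<infinity> \<longleftrightarrow> summable (\<lambda>k. c k * band_integral M \<phi> k)"
  proof -
    have nonneg: "0 \<le> c k * band_integral M \<phi> k" for k by (simp add: c_nonneg band_integral_nonneg)
    show ?thesis
    proof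
      assume "(\<Sum>k. ennreal (c k * band_integral M \<phi> k)) < \<infinity>"
      then show "summable (\<lambda>k. c k * band_integral M \<phi> k)"
        by (intro summable_suminf_not_top[OF nonneg]) simp
    next
      assume "summable (\<lambda>k. c k * band_integral M \<phi> k)"
      then show "(\<Sum>k. ennreal (c k * band_integral M \<phi> k)) < \<infinity>"
        using ennreal_suminf_neq_top[OF _ nonneg] by (simp add: less_top)
    qed
  qed
  moreover have "(\<lambda>x. c (nat \<lfloor>\<phi> x\<rfloor>) * \<phi> x) \<in> borel_measurable M" by measurable
  ultimately show ?thesis by (simp add: integrable_iff_bounded c_nonneg \<phi>_nonneg)
qed

lemma not_integrable_obtain_weight:
  fixes \<phi> :: "'a \<Rightarrow> real"
  assumes fin: "finite_measure M" and [measurable]: "\<phi> \<in> borel_measurable M"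
    and \<phi>_nonneg: "\<And>x. \<phi> x \<ge> 0" and "\<not> integrable M \<phi>"
  obtains h where "h \<in> borel_measurable M" "\<And>x. h x \<ge> 0"
    "integrable M (\<lambda>x. (h x)\<^sup>2 * \<phi> x)" "\<not> integrable M (\<lambda>x. h x * \<phi> x)"
proof -
  note band_iff = integrable_band_weighted_iff_summable[OF fin \<open>\<phi> \<in> borel_measurable M\<close> \<phi>_nonneg]
  have "\<not> summable (band_integral M \<phi>)"
    using band_iff[of "\<lambda>_. 1"] \<open>\<not> integrable M \<phi>\<close> by simp
  then obtain t where "\<And>k. t k \<ge> 0" "summable (\<lambda>k. (t k)\<^sup>2 * band_integral M \<phi> k)"
      "\<not> summable (\<lambda>k. t k * band_integral M \<phi> k)"
    using not_summable_obtain_weight[of "band_integral M \<phi>"] band_integral_nonneg by blast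
  then show ?thesis
    using that[of "\<lambda>x. t (nat \<lfloor>\<phi> x\<rfloor>)"] band_iff[of t] band_iff[of "\<lambda>k. (t k)\<^sup>2"] by simp
qed

section \<open>Gradients on Euclidean space\<close>

lemma GDERIV_grad: "GDERIV g u :> D \<Longrightarrow> GDERIV g u :> grad g u"
  unfolding grad_def by (rule someI)

lemma differentiable_imp_GDERIV_grad:
  fixes g :: "'v::euclidean_space \<Rightarrow> real"
  assumes "g differentiable (at z)"
  shows "GDERIV g z :> grad g z"
proof -
  obtain g' where g': "(g has_derivative g') (at z)"
    using assms unfolding differentiable_def by blast
  have "g' = (\<lambda>h. h \<bullet> adjoint g' 1)"
    using adjoint_works[OF has_derivative_linear[OF g']] by (simp add: fun_eq_iff)
  with g' have "GDERIV g z :> adjoint g' 1"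
    unfolding gderiv_def by simp
  then show ?thesis by (rule GDERIV_grad)
qed

lemma GDERIV_imp_DERIV_along_line:
  assumes "GDERIV g (z + t *\<^sub>R b) :> D"
  shows "DERIV (\<lambda>s. g (z + s *\<^sub>R b)) t :> D \<bullet> b"
proof -
  have "((\<lambda>s. z + s *\<^sub>R b) has_derivative (\<lambda>s. s *\<^sub>R b)) (at t)"
    by (auto intro!: derivative_eq_intros)
  from has_derivative_compose[OF this assms[unfolded gderiv_def]]
  have "((\<lambda>s. g (z + s *\<^sub>R b)) has_derivative (\<lambda>s. (s *\<^sub>R b) \<bullet> D)) (at t)"
    by (simp add: o_def)
  moreover have "(\<lambda>s. (s *\<^sub>R b) \<bullet> D) = (*) (D \<bullet> b)"
    by (auto simp: inner_commute)
  ultimately show ?thesis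
    unfolding has_field_derivative_def by simp
qed

lemma LG_on_UNIV_remainder_bound:
  fixes g :: "'v::euclidean_space \<Rightarrow> real"
  assumes "LG_on UNIV L g"
  shows "\<bar>g (z + h) - g z - grad g z \<bullet> h\<bar> \<le> L * (norm h)\<^sup>2"
proof -
  have grad: "GDERIV g u :> grad g u" for u
    using assms GDERIV_grad unfolding LG_on_def by blast
  have lipschitz: "norm (grad g u - grad g v) \<le> L * norm (u - v)" for u v
    using assms unfolding LG_on_def by blast
  obtain \<xi> where \<xi>: "0 < \<xi>" "\<xi> < 1"
    and mvt: "g (z + 1 *\<^sub>R h) - g (z + 0 *\<^sub>R h) = (1 - 0) * (grad g (z + \<xi> *\<^sub>R h) \<bullet> h)"
    using MVT2[of 0 1 "\<lambda>t. g (z + t *\<^sub>R h)" "\<lambda>t. grad g (z + t *\<^sub>R h) \<bullet> h"]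
      GDERIV_imp_DERIV_along_line[OF grad] by auto
  have "\<bar>g (z + h) - g z - grad g z \<bullet> h\<bar> = \<bar>(grad g (z + \<xi> *\<^sub>R h) - grad g z) \<bullet> h\<bar>"
    using mvt by (simp add: inner_diff_left)
  also have "\<dots> \<le> norm (grad g (z + \<xi> *\<^sub>R h) - grad g z) * norm h"
    by (rule Cauchy_Schwarz_ineq2)
  also have "\<dots> \<le> L * norm (\<xi> *\<^sub>R h) * norm h"
    using lipschitz[of "z + \<xi> *\<^sub>R h" z] by (intro mult_right_mono) auto
  also have "\<dots> = \<xi> * (L * (norm h)\<^sup>2)"
    using \<xi> by (simp add: power2_eq_square)
  finally have bound: "\<bar>g (z + h) - g z - grad g z \<bullet> h\<bar> \<le> \<xi> * (L * (norm h)\<^sup>2)" .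
  then have "0 \<le> \<xi> * (L * (norm h)\<^sup>2)"
    by (meson abs_ge_zero order_trans)
  then have "L * (norm h)\<^sup>2 \<ge> 0"
    using \<xi>(1) by (simp add: zero_le_mult_iff)
  then show ?thesis
    using bound mult_left_le_one_le[of "L * (norm h)\<^sup>2" \<xi>] \<xi> by linarith
qed

lemma DERIV_imp_difference_quotient_LIMSEQ:
  fixes \<phi> :: "real \<Rightarrow> real"
  assumes "DERIV \<phi> 0 :> c"
  shows "(\<lambda>n. (\<phi> (1 / Suc n) - \<phi> 0) * Suc n) \<longlonglongrightarrow> c"
proof -
  have "(\<lambda>t. (\<phi> (0 + t) - \<phi> 0) / t) \<midarrow>0\<rightarrow> c"
    using assms unfolding DERIV_def .
  then have seq: "(\<lambda>n. (\<phi> (0 + S n) - \<phi> 0) / S n) \<longlonglongrightarrow> c"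
    if "\<forall>n. S n \<noteq> 0" "S \<longlonglongrightarrow> 0" for S :: "nat \<Rightarrow> real"
    using that LIMSEQ_SEQ_conv[of 0 "\<lambda>t. (\<phi> (0 + t) - \<phi> 0) / t" c] by blast
  have "(\<lambda>n. 1 / real (Suc n)) \<longlonglongrightarrow> 0"
    using LIMSEQ_inverse_real_of_nat by (simp add: inverse_eq_divide)
  then show ?thesis
    using seq[of "\<lambda>n. 1 / real (Suc n)"] by simp
qed

section \<open>The space \<open>L\<^sup>2\<close>\<close>

lemma L2_borel_measurable: "f \<in> L2 M \<Longrightarrow> f \<in> borel_measurable M"
  unfolding L2_def by simp

lemma L2_add:
  assumes f: "f \<in> L2 M" and g: "g \<in> L2 M"
  shows "(\<lambda>x. f x + g x) \<in> L2 M"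
proof -
  note [measurable] = L2_borel_measurable[OF f] L2_borel_measurable[OF g]
  have bound: "(norm (f x + g x))\<^sup>2 \<le> 2 * (norm (f x))\<^sup>2 + 2 * (norm (g x))\<^sup>2" for x
  proof -
    have "(norm (f x + g x))\<^sup>2 \<le> (norm (f x) + norm (g x))\<^sup>2"
      by (simp add: norm_triangle_ineq power_mono)
    also have "\<dots> \<le> 2 * (norm (f x))\<^sup>2 + 2 * (norm (g x))\<^sup>2"
      using sum_squares_bound[of "norm (f x)" "norm (g x)"] by (simp add: power2_sum)
    finally show ?thesis .
  qed
  have "integrable M (\<lambda>x. 2 * (norm (f x))\<^sup>2 + 2 * (norm (g x))\<^sup>2)"
    using f g unfolding L2_def by simp
  then have "integrable M (\<lambda>x. (norm (f x + g x))\<^sup>2)"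
  proof (rule Bochner_Integration.integrable_bound)
    show "(\<lambda>x. (norm (f x + g x))\<^sup>2) \<in> borel_measurable M" by measurable
    show "AE x in M. norm ((norm (f x + g x))\<^sup>2) \<le> norm (2 * (norm (f x))\<^sup>2 + 2 * (norm (g x))\<^sup>2)"
      using bound by simp
  qed
  then show ?thesis unfolding L2_def by simp
qed

lemma L2_scaleR:
  assumes "f \<in> L2 M"
  shows "(\<lambda>x. c *\<^sub>R f x) \<in> L2 M"
proof -
  note [measurable] = L2_borel_measurable[OF assms]
  have "(\<lambda>x. c *\<^sub>R f x) \<in> borel_measurable M" by measurable
  then show ?thesis
    using assms by (simp add: L2_def power_mult_distrib)
qed

lemma L2_diff:
  assumes "f \<in> L2 M" "g \<in> L2 M"
  shows "(\<lambda>x. f x - g x) \<in> L2 M"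
  using L2_add[OF assms(1) L2_scaleR[OF assms(2), of "-1"]] by simp

lemma L2_const:
  assumes "finite_measure M"
  shows "(\<lambda>x. c) \<in> L2 M"
  using assms unfolding L2_def by (simp add: finite_measure.integrable_const)

lemma L2_integrable_inner:
  assumes f: "f \<in> L2 M" and g: "g \<in> L2 M"
  shows "integrable M (\<lambda>x. f x \<bullet> g x)"
proof -
  note [measurable] = L2_borel_measurable[OF f] L2_borel_measurable[OF g]
  have bound: "\<bar>f x \<bullet> g x\<bar> \<le> (norm (f x))\<^sup>2 + (norm (g x))\<^sup>2" for x
  proof -
    have "\<bar>f x \<bullet> g x\<bar> \<le> norm (f x) * norm (g x)"
      by (rule Cauchy_Schwarz_ineq2)
    also have "\<dots> \<le> (norm (f x))\<^sup>2 + (norm (g x))\<^sup>2"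
      using sum_squares_bound[of "norm (f x)" "norm (g x)"]
        mult_nonneg_nonneg[OF norm_ge_zero[of "f x"] norm_ge_zero[of "g x"]]
      by linarith
    finally show ?thesis .
  qed
  have "integrable M (\<lambda>x. (norm (f x))\<^sup>2 + (norm (g x))\<^sup>2)"
    using f g unfolding L2_def by simp
  then show ?thesis
  proof (rule Bochner_Integration.integrable_bound)
    show "(\<lambda>x. f x \<bullet> g x) \<in> borel_measurable M" by measurable
    show "AE x in M. norm (f x \<bullet> g x) \<le> norm ((norm (f x))\<^sup>2 + (norm (g x))\<^sup>2)"
      using bound by simp
  qed
qed

lemma power2_L2_norm: "(L2_norm M f)\<^sup>2 = (\<integral>x. (norm (f x))\<^sup>2 \<partial>M)"
  unfolding L2_norm_def by (simp add: integral_nonneg_AE)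

lemma L2_norm_nonneg: "L2_norm M f \<ge> 0"
  unfolding L2_norm_def by simp

lemma L2_norm_scaleR: "L2_norm M (\<lambda>x. c *\<^sub>R f x) = \<bar>c\<bar> * L2_norm M f"
  unfolding L2_norm_def by (simp add: power_mult_distrib real_sqrt_mult)

lemma L2_norm_le_AE:
  assumes u: "u \<in> L2 M" and v: "v \<in> L2 M" and "c \<ge> 0"
    and le: "AE x in M. norm (u x) \<le> c * norm (v x)"
  shows "L2_norm M u \<le> c * L2_norm M v"
proof -
  have "(\<integral>x. (norm (u x))\<^sup>2 \<partial>M) \<le> (\<integral>x. c\<^sup>2 * (norm (v x))\<^sup>2 \<partial>M)"
  proof (rule integral_mono_AE)
    show "integrable M (\<lambda>x. (norm (u x))\<^sup>2)" using u unfolding L2_def by simp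
    show "integrable M (\<lambda>x. c\<^sup>2 * (norm (v x))\<^sup>2)" using v unfolding L2_def by simp
    show "AE x in M. (norm (u x))\<^sup>2 \<le> c\<^sup>2 * (norm (v x))\<^sup>2"
      using le
    proof eventually_elim
      case (elim x)
      then show ?case using power_mono[OF elim norm_ge_zero, of 2] by (simp add: power_mult_distrib)
    qed
  qed
  then have "L2_norm M u \<le> sqrt (c\<^sup>2 * (\<integral>x. (norm (v x))\<^sup>2 \<partial>M))"
    unfolding L2_norm_def by simp
  then show ?thesis
    using \<open>c \<ge> 0\<close> unfolding L2_norm_def by (simp add: real_sqrt_mult)
qed

lemma L2_norm_cong_AE:
  assumes "u \<in> L2 M" "v \<in> L2 M" and eq: "AE x in M. u x = v x"
  shows "L2_norm M u = L2_norm M v"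
proof (rule antisym)
  show "L2_norm M u \<le> L2_norm M v"
    using L2_norm_le_AE[OF assms(1,2), of 1] eq by (simp add: eventually_mono)
  show "L2_norm M v \<le> L2_norm M u"
    using L2_norm_le_AE[OF assms(2,1), of 1] eq by (simp add: eventually_mono)
qed

lemma L2_if_integrable_inner:
  fixes a :: "'a \<Rightarrow> real^'l"
  assumes fin: "finite_measure M" and a [measurable]: "a \<in> borel_measurable M"
    and inner: "\<And>f. f \<in> L2 M \<Longrightarrow> integrable M (\<lambda>x. a x \<bullet> f x)"
  shows "a \<in> L2 M"
proof (rule ccontr)
  assume "a \<notin> L2 M"
  then have not_integrable: "\<not> integrable M (\<lambda>x. (norm (a x))\<^sup>2)"
    unfolding L2_def by simp
  have "(\<lambda>x. (norm (a x))\<^sup>2) \<in> borel_measurable M" by measurable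
  from not_integrable_obtain_weight[OF fin this zero_le_power2 not_integrable]
  obtain h where [measurable]: "h \<in> borel_measurable M" and "\<And>x. h x \<ge> 0"
    and h2: "integrable M (\<lambda>x. (h x)\<^sup>2 * (norm (a x))\<^sup>2)"
    and h1: "\<not> integrable M (\<lambda>x. h x * (norm (a x))\<^sup>2)"
    by blast
  have "(\<lambda>x. h x *\<^sub>R a x) \<in> borel_measurable M" by measurable
  then have "(\<lambda>x. h x *\<^sub>R a x) \<in> L2 M"
    using h2 by (simp add: L2_def power_mult_distrib)
  from inner[OF this] have "integrable M (\<lambda>x. h x * (norm (a x))\<^sup>2)"
    by (simp add: power2_norm_eq_inner)
  with h1 show False by contradiction
qed

lemma has_L2_gradient_diff_bound:
  fixes G1 G2 :: "'a \<Rightarrow> real^'l"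
  assumes g1: "has_L2_gradient M F f G1" and g2: "has_L2_gradient M F f G2" and "e > 0"
  obtains d where "d > 0" "\<And>h. h \<in> L2 M \<Longrightarrow> L2_norm M h < d \<Longrightarrow>
      \<bar>L2_inner M G1 h - L2_inner M G2 h\<bar> \<le> 2 * e * L2_norm M h"
proof -
  obtain d1 where "d1 > 0" and d1: "\<forall>h\<in>L2 M. L2_norm M h < d1 \<longrightarrow>
      \<bar>F (\<lambda>x. f x + h x) - F f - L2_inner M G1 h\<bar> \<le> e * L2_norm M h"
    using g1 \<open>e > 0\<close> unfolding has_L2_gradient_def by blast
  obtain d2 where "d2 > 0" and d2: "\<forall>h\<in>L2 M. L2_norm M h < d2 \<longrightarrow>
      \<bar>F (\<lambda>x. f x + h x) - F f - L2_inner M G2 h\<bar> \<le> e * L2_norm M h"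
    using g2 \<open>e > 0\<close> unfolding has_L2_gradient_def by blast
  show thesis
  proof (rule that[of "min d1 d2"])
    show "min d1 d2 > 0" using \<open>d1 > 0\<close> \<open>d2 > 0\<close> by simp
    fix h :: "'a \<Rightarrow> real^'l" assume "h \<in> L2 M" "L2_norm M h < min d1 d2"
    with d1 d2 show "\<bar>L2_inner M G1 h - L2_inner M G2 h\<bar> \<le> 2 * e * L2_norm M h"
      by fastforce
  qed
qed

lemma has_L2_gradient_unique:
  assumes g1: "has_L2_gradient M F f G1" and g2: "has_L2_gradient M F f G2"
  shows "AE x in M. G1 x = G2 x"
proof -
  have G1: "G1 \<in> L2 M" and G2: "G2 \<in> L2 M"
    using g1 g2 unfolding has_L2_gradient_def by auto
  define \<Delta> where "\<Delta> x = G1 x - G2 x" for x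
  have \<Delta>: "\<Delta> \<in> L2 M" unfolding \<Delta>_def using G1 G2 by (rule L2_diff)
  let ?n = "L2_norm M \<Delta>"
  have "?n = 0"
  proof (rule ccontr)
    assume "?n \<noteq> 0"
    then have n: "?n > 0" using L2_norm_nonneg[of M \<Delta>] by linarith
    then obtain d where "d > 0" and bound: "\<And>h. h \<in> L2 M \<Longrightarrow> L2_norm M h < d \<Longrightarrow>
        \<bar>L2_inner M G1 h - L2_inner M G2 h\<bar> \<le> 2 * (?n / 4) * L2_norm M h"
      using has_L2_gradient_diff_bound[OF g1 g2, of "?n / 4"] by auto
    define t where "t = d / (2 * ?n)"
    have t: "t > 0" "t * ?n < d"
      unfolding t_def using n \<open>d > 0\<close> by auto
    have h: "(\<lambda>x. t *\<^sub>R \<Delta> x) \<in> L2 M" using \<Delta> by (rule L2_scaleR)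
    have norm_h: "L2_norm M (\<lambda>x. t *\<^sub>R \<Delta> x) = t * ?n"
      using t by (simp add: L2_norm_scaleR)
    have "L2_inner M G1 (\<lambda>x. t *\<^sub>R \<Delta> x) - L2_inner M G2 (\<lambda>x. t *\<^sub>R \<Delta> x) = t * ?n\<^sup>2"
      using L2_integrable_inner[OF G1 \<Delta>] L2_integrable_inner[OF G2 \<Delta>]
      unfolding L2_inner_def power2_L2_norm \<Delta>_def
      by (simp add: inner_diff_left power2_norm_eq_inner right_diff_distrib)
    then have "t * ?n\<^sup>2 \<le> (t * ?n\<^sup>2) / 2"
      using bound[OF h] norm_h t by (simp add: power2_eq_square)
    then show False
      using t n by simp
  qed
  then have "(\<integral>x. (norm (\<Delta> x))\<^sup>2 \<partial>M) = 0"
    by (simp add: power2_L2_norm[symmetric])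
  then have "AE x in M. (norm (\<Delta> x))\<^sup>2 = 0"
    using \<Delta> by (subst (asm) integral_nonneg_eq_0_iff_AE) (auto simp: L2_def)
  then show ?thesis
    by eventually_elim (simp add: \<Delta>_def)
qed

section \<open>Integral functionals of LG integrands\<close>

locale LG_integrand =
  fixes M :: "'a measure" and \<iota> :: "'a \<Rightarrow> real^'l \<Rightarrow> real" and L :: real
  assumes finite_measure: "finite_measure M"
    and L_nonneg: "L \<ge> 0"
    and differentiable: "\<And>x z. \<iota> x differentiable (at z)"
    and integrable_comp: "\<And>f. f \<in> L2 M \<Longrightarrow> integrable M (\<lambda>x. \<iota> x (f x))"
    and LG: "AE x in M. LG_on UNIV L (\<iota> x)"
begin

lemma borel_measurable_integrand_comp: "f \<in> L2 M \<Longrightarrow> (\<lambda>x. \<iota> x (f x)) \<in> borel_measurable M"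
  using integrable_comp by (rule borel_measurable_integrable)

lemma borel_measurable_grad_comp:
  assumes f: "f \<in> L2 M"
  shows "(\<lambda>x. grad (\<iota> x) (f x)) \<in> borel_measurable M"
proof -
  have shifted: "(\<lambda>x. \<iota> x (f x + c)) \<in> borel_measurable M" for c
    using borel_measurable_integrand_comp[OF L2_add[OF f L2_const[OF finite_measure]]] .
  have "(\<lambda>x. grad (\<iota> x) (f x) \<bullet> b) \<in> borel_measurable M" for b
  proof (rule borel_measurable_LIMSEQ_real)
    fix x
    have "DERIV (\<lambda>t. \<iota> x (f x + t *\<^sub>R b)) 0 :> grad (\<iota> x) (f x) \<bullet> b"
      using GDERIV_imp_DERIV_along_line[of "\<iota> x" "f x" 0 b]
        differentiable_imp_GDERIV_grad[OF differentiable] by simp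
    then show "(\<lambda>n. (\<iota> x (f x + (1 / Suc n) *\<^sub>R b) - \<iota> x (f x + 0 *\<^sub>R b)) * Suc n)
        \<longlonglongrightarrow> grad (\<iota> x) (f x) \<bullet> b"
      by (rule DERIV_imp_difference_quotient_LIMSEQ[where \<phi> = "\<lambda>t. \<iota> x (f x + t *\<^sub>R b)"])
  next
    fix n
    note [measurable] = shifted[of "(1 / Suc n) *\<^sub>R b"] shifted[of "0 *\<^sub>R b"]
    show "(\<lambda>x. (\<iota> x (f x + (1 / Suc n) *\<^sub>R b) - \<iota> x (f x + 0 *\<^sub>R b)) * Suc n)
        \<in> borel_measurable M"
      by measurable
  qed
  then have "(\<lambda>x. \<Sum>b\<in>Basis. (grad (\<iota> x) (f x) \<bullet> b) *\<^sub>R b) \<in> borel_measurable M"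
    by (intro borel_measurable_sum borel_measurable_scaleR borel_measurable_const)
  then show ?thesis
    by (simp add: euclidean_representation)
qed

lemma AE_remainder_bound:
  "AE x in M. \<forall>z h. \<bar>\<iota> x (z + h) - \<iota> x z - grad (\<iota> x) z \<bullet> h\<bar> \<le> L * (norm h)\<^sup>2"
  using LG by eventually_elim (intro allI LG_on_UNIV_remainder_bound)

lemma integrable_remainder:
  assumes f: "f \<in> L2 M" and h: "h \<in> L2 M"
  shows "integrable M (\<lambda>x. \<iota> x (f x + h x) - \<iota> x (f x) - grad (\<iota> x) (f x) \<bullet> h x)"
proof -
  note [measurable] = borel_measurable_integrand_comp[OF L2_add[OF f h]] borel_measurable_integrand_comp[OF f]
    borel_measurable_grad_comp[OF f] L2_borel_measurable[OF h]
  have "integrable M (\<lambda>x. L * (norm (h x))\<^sup>2)"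
    using h unfolding L2_def by simp
  then show ?thesis
  proof (rule Bochner_Integration.integrable_bound)
    show "(\<lambda>x. \<iota> x (f x + h x) - \<iota> x (f x) - grad (\<iota> x) (f x) \<bullet> h x) \<in> borel_measurable M"
      by measurable
    show "AE x in M. norm (\<iota> x (f x + h x) - \<iota> x (f x) - grad (\<iota> x) (f x) \<bullet> h x)
        \<le> norm (L * (norm (h x))\<^sup>2)"
      using AE_remainder_bound by eventually_elim (simp add: L_nonneg)
  qed
qed

lemma remainder_integral_bound:
  assumes f: "f \<in> L2 M" and h: "h \<in> L2 M"
  shows "\<bar>\<integral>x. \<iota> x (f x + h x) - \<iota> x (f x) - grad (\<iota> x) (f x) \<bullet> h x \<partial>M\<bar> \<le> L * (L2_norm M h)\<^sup>2"
proof -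
  have "\<bar>\<integral>x. \<iota> x (f x + h x) - \<iota> x (f x) - grad (\<iota> x) (f x) \<bullet> h x \<partial>M\<bar>
      \<le> (\<integral>x. \<bar>\<iota> x (f x + h x) - \<iota> x (f x) - grad (\<iota> x) (f x) \<bullet> h x\<bar> \<partial>M)"
    by (rule integral_abs_bound)
  also have "\<dots> \<le> (\<integral>x. L * (norm (h x))\<^sup>2 \<partial>M)"
  proof (rule integral_mono_AE)
    show "integrable M (\<lambda>x. \<bar>\<iota> x (f x + h x) - \<iota> x (f x) - grad (\<iota> x) (f x) \<bullet> h x\<bar>)"
      using integrable_remainder[OF f h] by simp
    show "integrable M (\<lambda>x. L * (norm (h x))\<^sup>2)"
      using h unfolding L2_def by simp
    show "AE x in M. \<bar>\<iota> x (f x + h x) - \<iota> x (f x) - grad (\<iota> x) (f x) \<bullet> h x\<bar> \<le> L * (norm (h x))\<^sup>2"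
      using AE_remainder_bound by eventually_elim simp
  qed
  also have "\<dots> = L * (L2_norm M h)\<^sup>2"
    by (simp add: power2_L2_norm)
  finally show ?thesis .
qed

lemma integrable_inner_grad:
  assumes f: "f \<in> L2 M" and h: "h \<in> L2 M"
  shows "integrable M (\<lambda>x. grad (\<iota> x) (f x) \<bullet> h x)"
proof -
  have "integrable M (\<lambda>x. (\<iota> x (f x + h x) - \<iota> x (f x))
      - (\<iota> x (f x + h x) - \<iota> x (f x) - grad (\<iota> x) (f x) \<bullet> h x))"
    using Bochner_Integration.integrable_diff[OF Bochner_Integration.integrable_diff
        [OF integrable_comp[OF L2_add[OF f h]] integrable_comp[OF f]] integrable_remainder[OF f h]] .
  then show ?thesis by (simp add: algebra_simps)
qed

lemma grad_comp_in_L2: "f \<in> L2 M \<Longrightarrow> (\<lambda>x. grad (\<iota> x) (f x)) \<in> L2 M"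
  by (rule L2_if_integrable_inner[OF finite_measure borel_measurable_grad_comp integrable_inner_grad])

lemma has_L2_gradient_int_functional:
  assumes f: "f \<in> L2 M"
  shows "has_L2_gradient M (int_functional M \<iota>) f (\<lambda>x. grad (\<iota> x) (f x))"
  unfolding has_L2_gradient_def
proof (intro conjI allI impI grad_comp_in_L2[OF f])
  fix e :: real assume "e > 0"
  show "\<exists>d>0. \<forall>h\<in>L2 M. L2_norm M h < d \<longrightarrow>
      \<bar>int_functional M \<iota> (\<lambda>x. f x + h x) - int_functional M \<iota> f - L2_inner M (\<lambda>x. grad (\<iota> x) (f x)) h\<bar>
        \<le> e * L2_norm M h"
  proof (intro exI[of _ "e / (L + 1)"] conjI ballI impI)
    show "e / (L + 1) > 0" using \<open>e > 0\<close> L_nonneg by simp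
    fix h :: "'a \<Rightarrow> real^'l" assume h: "h \<in> L2 M" and small: "L2_norm M h < e / (L + 1)"
    have "int_functional M \<iota> (\<lambda>x. f x + h x) - int_functional M \<iota> f - L2_inner M (\<lambda>x. grad (\<iota> x) (f x)) h
        = (\<integral>x. \<iota> x (f x + h x) - \<iota> x (f x) - grad (\<iota> x) (f x) \<bullet> h x \<partial>M)"
      using integrable_comp[OF L2_add[OF f h]] integrable_comp[OF f] integrable_inner_grad[OF f h]
      unfolding int_functional_def L2_inner_def by simp
    moreover have "L * (L2_norm M h)\<^sup>2 \<le> e * L2_norm M h"
    proof -
      have "L * L2_norm M h \<le> e"
        using small L_nonneg L2_norm_nonneg[of M h] \<open>e > 0\<close> by (simp add: field_simps)
      then show ?thesis
        using L2_norm_nonneg[of M h] by (simp add: power2_eq_square mult_right_mono flip: mult.assoc)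
    qed
    ultimately show "\<bar>int_functional M \<iota> (\<lambda>x. f x + h x) - int_functional M \<iota> f
        - L2_inner M (\<lambda>x. grad (\<iota> x) (f x)) h\<bar> \<le> e * L2_norm M h"
      using remainder_integral_bound[OF f h] by linarith
  qed
qed

lemma AE_eq_grad_if_has_L2_gradient:
  assumes "f \<in> L2 M" "has_L2_gradient M (int_functional M \<iota>) f G"
  shows "AE x in M. G x = grad (\<iota> x) (f x)"
  using has_L2_gradient_unique[OF assms(2) has_L2_gradient_int_functional[OF assms(1)]] .

lemma L2_LG_int_functional: "L2_LG M L (int_functional M \<iota>)"
  unfolding L2_LG_def
proof (intro conjI ballI allI impI)
  fix f :: "'a \<Rightarrow> real^'l" assume "f \<in> L2 M"
  then show "\<exists>G. has_L2_gradient M (int_functional M \<iota>) f G"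
    using has_L2_gradient_int_functional by blast
next
  fix f g Gf Gg :: "'a \<Rightarrow> real^'l"
  assume f: "f \<in> L2 M" and g: "g \<in> L2 M"
    and Gf: "has_L2_gradient M (int_functional M \<iota>) f Gf"
    and Gg: "has_L2_gradient M (int_functional M \<iota>) g Gg"
  have "AE x in M. norm (Gf x - Gg x) \<le> L * norm (f x - g x)"
    using AE_eq_grad_if_has_L2_gradient[OF f Gf] AE_eq_grad_if_has_L2_gradient[OF g Gg] LG
    by eventually_elim (simp add: LG_on_def)
  moreover have "(\<lambda>x. Gf x - Gg x) \<in> L2 M"
    using Gf Gg by (intro L2_diff) (auto simp: has_L2_gradient_def)
  ultimately show "L2_norm M (\<lambda>x. Gf x - Gg x) \<le> L * L2_norm M (\<lambda>x. f x - g x)"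
    using L2_norm_le_AE L2_diff[OF f g] L_nonneg by blast
qed

lemma int_functional_PL_bound:
  assumes PL: "AE x in M. PL_on UNIV lam (\<iota> x)" and f: "f \<in> L2 M" and g: "g \<in> L2 M"
  shows "lam * (int_functional M \<iota> f - int_functional M \<iota> g)
    \<le> 1/2 * (L2_norm M (\<lambda>x. grad (\<iota> x) (f x)))\<^sup>2"
proof -
  have "(\<integral>x. lam * (\<iota> x (f x) - \<iota> x (g x)) \<partial>M) \<le> (\<integral>x. 1/2 * (norm (grad (\<iota> x) (f x)))\<^sup>2 \<partial>M)"
  proof (rule integral_mono_AE)
    show "integrable M (\<lambda>x. lam * (\<iota> x (f x) - \<iota> x (g x)))"
      using integrable_comp[OF f] integrable_comp[OF g] by simp
    show "integrable M (\<lambda>x. 1/2 * (norm (grad (\<iota> x) (f x)))\<^sup>2)"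
      using grad_comp_in_L2[OF f] unfolding L2_def by simp
    show "AE x in M. lam * (\<iota> x (f x) - \<iota> x (g x)) \<le> 1/2 * (norm (grad (\<iota> x) (f x)))\<^sup>2"
      using PL
    proof eventually_elim
      case (elim x)
      then have "lam > 0" "(INF w. \<iota> x w) \<le> \<iota> x (g x)"
        and "lam * (\<iota> x (f x) - (INF w. \<iota> x w)) \<le> 1/2 * (norm (grad (\<iota> x) (f x)))\<^sup>2"
        unfolding PL_on_def by (auto intro: cINF_lower)
      then show ?case
        using mult_left_mono[of "\<iota> x (f x) - \<iota> x (g x)" "\<iota> x (f x) - (INF w. \<iota> x w)" lam] by linarith
    qed
  qed
  then show ?thesis
    using integrable_comp[OF f] integrable_comp[OF g] by (simp add: int_functional_def power2_L2_norm)
qed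

lemma L2_PL_int_functional:
  assumes lam: "lam > 0" and PL: "AE x in M. PL_on UNIV lam (\<iota> x)"
  shows "L2_PL M lam (int_functional M \<iota>)"
proof -
  let ?F = "int_functional M \<iota>"
  let ?N = "\<lambda>f. (L2_norm M (\<lambda>x. grad (\<iota> x) (f x)))\<^sup>2"
  have lower: "?F f - ?N f / (2 * lam) \<le> ?F g" if "f \<in> L2 M" "g \<in> L2 M" for f g
    using int_functional_PL_bound[OF PL that] lam by (simp add: field_simps)
  have zero: "(\<lambda>x. 0) \<in> L2 M"
    by (rule L2_const[OF finite_measure])
  have "bdd_below (?F ` L2 M)"
    using lower[OF zero] by (intro bdd_belowI2)
  moreover have "lam * (?F f - (INF g\<in>L2 M. ?F g)) \<le> 1/2 * (L2_norm M G)\<^sup>2"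
    if f: "f \<in> L2 M" and G: "has_L2_gradient M ?F f G" for f G
  proof -
    have "?F f - ?N f / (2 * lam) \<le> (INF g\<in>L2 M. ?F g)"
      using zero lower[OF f] by (intro cINF_greatest) auto
    moreover have "L2_norm M G = L2_norm M (\<lambda>x. grad (\<iota> x) (f x))"
      using G grad_comp_in_L2[OF f] AE_eq_grad_if_has_L2_gradient[OF f G]
      by (intro L2_norm_cong_AE) (auto simp: has_L2_gradient_def)
    ultimately show ?thesis
      using lam by (simp add: field_simps)
  qed
  ultimately show ?thesis
    unfolding L2_PL_def using lam by blast
qed

end

theorem lemma4:
  fixes M :: "'a::polish_space measure"
    and \<iota> :: "'a \<Rightarrow> real^'l \<Rightarrow> real"
    and L :: real
  assumes borel: "sets M = sets borel"
    and prob: "prob_space M"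
    and L_nonneg: "L \<ge> 0"
    and meas: "\<And>z. (\<lambda>x. \<iota> x z) \<in> borel_measurable M"
    and diff: "\<And>x z. (\<iota> x) differentiable (at z)"
    and wd: "\<And>f. f \<in> L2 M \<Longrightarrow> integrable M (\<lambda>x. \<iota> x (f x))"
    and LG: "AE x in M. LG_on UNIV L (\<iota> x)"
  shows "(\<forall>f\<in>L2 M. (\<exists>G. has_L2_gradient M (int_functional M \<iota>) f G) \<and>
            (\<forall>G. has_L2_gradient M (int_functional M \<iota>) f G \<longrightarrow>
               (AE x in M. G x = grad (\<iota> x) (f x))))
         \<and> L2_LG M L (int_functional M \<iota>)
         \<and> (\<forall>lam>0. (AE x in M. PL_on UNIV lam (\<iota> x)) \<longrightarrow> L2_PL M lam (int_functional M \<iota>))"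
proof -
  interpret LG_integrand M \<iota> L
    by (rule LG_integrand.intro[OF prob_space.finite_measure[OF prob] L_nonneg diff wd LG])
  show ?thesis
    using has_L2_gradient_int_functional AE_eq_grad_if_has_L2_gradient
      L2_LG_int_functional L2_PL_int_functional
    by blast
qed

end
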